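(* Let $S_{(1,1)}(x)=\sum_{p\ge1}\binom{2p}{p}x^{2p}$ be the generating function of nonempty $(1,1)$-balanced words over two letters, and $C_{(1,1)}(x)$ the generating function of $(1,1)$-balanced necklaces (by length). Then $$C_{(1,1)}(x)=\sum_{n\ge1}\frac{\varphi(n)}{n}\sum_{p\ge1}\frac{1}{2p}\binom{2p}{p}x^{2np},\qquad x\,C_{(1,1)}'(x)=\sum_{n\ge1}\varphi(n)\,S_{(1,1)}(x^n).$$ Equivalently, the pointed class $\Theta Cyc_{(1,1)}$ is isomorphic (same number of objects of each size) to $\sum_{n>0}\varphi(n)\,Rep_n(Seq_{(1,1)})$. *)

theory Defs
  imports "HOL-Computational_Algebra.Formal_Power_Series" "HOL-Number_Theory.Totient"
begin

definition balanced11 :: "bool list \<Rightarrow> bool" where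
  "balanced11 w \<longleftrightarrow> count_list w True = count_list w False"

definition necklace :: "'a list \<Rightarrow> 'a list set" where
  "necklace w = {rotate k w | k. True}"

definition balanced_necklaces :: "nat \<Rightarrow> bool list set set" where
  "balanced_necklaces m = necklace ` {w. length w = m \<and> balanced11 w}"

definition C11 :: "real fps" where
  "C11 = Abs_fps (\<lambda>m. if m = 0 then 0 else real (card (balanced_necklaces m)))"

definition S11 :: "real fps" where
  "S11 = Abs_fps (\<lambda>m. if m \<noteq> 0 \<and> even m then real (m choose (m div 2)) else 0)"

definition L11 :: "real fps" where
  "L11 = Abs_fps (\<lambda>m. if m \<noteq> 0 \<and> even m then real (m choose (m div 2)) / real m else 0)"

end

theory Submission
  imports Defs
begin

(* Let B(n) = num_balanced n = binom(n, n/2) for even n, 0 otherwise; B(n) counts the balanced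
   words of length n and is the n-th coefficient of S11, while L11 has coefficients
   B(n)/n.  The whole theorem reduces to the coefficient identity

       m * #(balanced necklaces of length m) = sum_{d | m} phi(d) * B(m/d),

   which is Burnside's lemma for the cyclic group of rotations acting on balanced
   words of length m:  a word is fixed by rotation by k iff it is the (m/g)-fold
   repetition of its prefix of length g = gcd(k, m), so there are B(g) such words, and
   exactly phi(d) rotations k < m have gcd(k, m) = m/d. *)

unbundle fps_syntax

lemma count_list_concat_replicate:
  "count_list (concat (replicate q u)) x = q * count_list u x"
  by (induction q) simp_all

lemma count_list_rotate: "count_list (rotate k xs) x = count_list xs x"
proof -
  have rotate1: "count_list (rotate1 ys) x = count_list ys x" for ys :: "'a list"
    by (cases ys) simp_all
  show ?thesis by (induction k) (simp_all add: rotate1)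
qed

lemma balanced11_rotate [simp]: "balanced11 (rotate k w) = balanced11 w"
  by (simp add: balanced11_def count_list_rotate)

lemma rotate_fixed_mult:
  assumes "rotate k w = w"
  shows "rotate (k * c) w = w"
proof (induction c)
  case (Suc c)
  have "rotate (k * Suc c) w = rotate k (rotate (k * c) w)"
    by (simp add: rotate_rotate)
  then show ?case using Suc assms by simp
qed simp

(* ... and, by Bezout, a word of length m is fixed by rotation by k exactly when it
   is fixed by rotation by gcd(k, m). *)
lemma rotate_fixed_iff_gcd:
  "rotate k w = w \<longleftrightarrow> rotate (gcd k (length w)) w = w"
proof
  assume fixed: "rotate k w = w"
  show "rotate (gcd k (length w)) w = w"
  proof (cases "k = 0")
    case False
    then obtain x y where bezout: "k * x = length w * y + gcd k (length w)"
      using bezout_nat[of k "length w"] by blast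
    have "rotate (gcd k (length w)) w = rotate (length w * y + gcd k (length w)) w"
      by (subst (1 2) rotate_conv_mod) simp
    also have "\<dots> = w"
      using rotate_fixed_mult[OF fixed, of x] by (simp only: bezout)
    finally show ?thesis .
  qed simp
next
  assume "rotate (gcd k (length w)) w = w"
  then show "rotate k w = w"
    using rotate_fixed_mult[of "gcd k (length w)" w "k div gcd k (length w)"] by simp
qed

lemma rotate_concat_replicate:
  "rotate (length u) (concat (replicate q u)) = concat (replicate q u)"
proof (cases q)
  case (Suc q')
  have "concat (replicate q' u) @ u = u @ concat (replicate q' u)"
    by (induction q') simp_all
  then show ?thesis using Suc by (simp add: rotate_append)
qed simp

(* Conversely, a word of length g*q fixed by rotation by g is the q-th power of its
   prefix of length g: writing w = u v, the fixed-point equation says u v = v u,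
   which forces v to be fixed by rotation by g as well, and induction applies. *)
lemma rotate_fixed_iff_power:
  assumes "length w = g * q"
  shows "rotate g w = w \<longleftrightarrow> w = concat (replicate q (take g w))"
proof
  assume w: "w = concat (replicate q (take g w))"
  show "rotate g w = w"
  proof (cases q)
    case (Suc q')
    then have "length (take g w) = g" using assms by simp
    then show ?thesis using rotate_concat_replicate[of "take g w" q] w by simp
  qed (use assms in simp)
next
  assume "rotate g w = w"
  with assms show "w = concat (replicate q (take g w))"
  proof (induction q arbitrary: w)
    case (Suc q)
    define u v where "u = take g w" and "v = drop g w"
    have len: "length u = g" "length v = g * q"
      using Suc.prems(1) by (simp_all add: u_def v_def)
    have w: "w = u @ v" by (simp add: u_def v_def)
    have comm: "v @ u = u @ v"
      using Suc.prems len by (metis rotate_append w)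
    have "v = concat (replicate q u)"
    proof (cases "q = 0")
      case False
      then have "g \<le> length v" using len by simp
      then have take_v: "take g v = u" and drop_v: "drop g v @ u = v"
        using arg_cong[OF comm, of "take g"] arg_cong[OF comm, of "drop g"] len by simp_all
      have "rotate g v = rotate (length u) (u @ drop g v)"
        using take_v len by (metis append_take_drop_id)
      then have "rotate g v = v" using drop_v by (simp add: rotate_append)
      then show ?thesis using Suc.IH[OF len(2)] take_v by simp
    qed (use len in simp)
    then have "w = concat (replicate (Suc q) u)" using w by simp
    then show ?case by (subst u_def[symmetric])
  qed simp
qed

lemma rotation_fixed_words:
  fixes k m :: nat
  assumes "m > 0"
  defines "g \<equiv> gcd k m"
  shows "{w :: 'a list. length w = m \<and> rotate k w = w}
       = (\<lambda>u. concat (replicate (m div g) u)) ` {u. length u = g}"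
proof -
  have m: "m = g * (m div g)" by (simp add: g_def)
  show ?thesis
  proof (intro equalityI subsetI)
    fix w :: "'a list" assume "w \<in> {w. length w = m \<and> rotate k w = w}"
    then have "length w = m" and "rotate g w = w"
      using rotate_fixed_iff_gcd[of k w] by (auto simp: g_def)
    then have "w = concat (replicate (m div g) (take g w))"
      using rotate_fixed_iff_power m by metis
    moreover have "length (take g w) = g"
      using \<open>length w = m\<close> assms gcd_le2_nat[of m k] by (simp add: g_def)
    ultimately show "w \<in> (\<lambda>u. concat (replicate (m div g) u)) ` {u. length u = g}" by blast
  next
    fix w :: "'a list" assume "w \<in> (\<lambda>u. concat (replicate (m div g) u)) ` {u. length u = g}"
    then obtain u where u: "length u = g" and w: "w = concat (replicate (m div g) u)" by blast
    have "length w = m" using u w m by (simp add: length_concat sum_list_replicate mult.commute)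
    moreover have "rotate g w = w" using rotate_concat_replicate[of u] u w by simp
    ultimately show "w \<in> {w. length w = m \<and> rotate k w = w}"
      using rotate_fixed_iff_gcd[of k w] by (simp add: g_def)
  qed
qed

(* Since repetition preserves balance and the prefix recovers the repeated word,
   the balanced fixed words are in bijection with balanced words of length gcd(k, m). *)
lemma card_rotation_fixed_balanced:
  assumes "m > 0"
  shows "card {w. length w = m \<and> balanced11 w \<and> rotate k w = w}
       = card {u. length u = gcd k m \<and> balanced11 u}"
proof -
  let ?rep = "\<lambda>u :: bool list. concat (replicate (m div gcd k m) u)"
  have "m div gcd k m > 0" using assms by (simp add: div_greater_zero_iff)
  then have balanced_rep: "balanced11 (?rep u) \<longleftrightarrow> balanced11 u" for u
    by (simp add: balanced11_def count_list_concat_replicate)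
  have "{w. length w = m \<and> balanced11 w \<and> rotate k w = w}
      = {w \<in> {w. length w = m \<and> rotate k w = w}. balanced11 w}" by blast
  also have "\<dots> = ?rep ` {u. length u = gcd k m \<and> balanced11 u}"
    unfolding rotation_fixed_words[OF assms] using balanced_rep by auto
  finally have image: "{w. length w = m \<and> balanced11 w \<and> rotate k w = w}
      = ?rep ` {u. length u = gcd k m \<and> balanced11 u}" .
  have "inj_on ?rep {u. length u = gcd k m \<and> balanced11 u}"
  proof (rule inj_on_inverseI)
    fix u :: "bool list" assume "u \<in> {u. length u = gcd k m \<and> balanced11 u}"
    then show "take (gcd k m) (?rep u) = u"
      using \<open>m div gcd k m > 0\<close> by (cases "m div gcd k m") simp_all
  qed
  then show ?thesis by (simp add: image card_image)
qed

lemma count_list_True_eq_card: "count_list u True = card {i. i < length u \<and> u ! i}"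
  by (simp add: count_list_eq_length_filter length_filter_conv_card)

lemma card_words_with_count:
  "card {u :: bool list. length u = n \<and> count_list u True = k} = n choose k"
proof -
  let ?positions = "\<lambda>u :: bool list. {i. i < length u \<and> u ! i}"
  let ?word = "\<lambda>S. map (\<lambda>i. i \<in> S) [0..<n]"
  have "bij_betw ?positions {u. length u = n \<and> count_list u True = k} {S. S \<subseteq> {..<n} \<and> card S = k}"
  proof (rule bij_betw_byWitness[where f' = ?word])
    show "\<forall>u\<in>{u. length u = n \<and> count_list u True = k}. ?word (?positions u) = u"
      by (auto intro!: nth_equalityI)
    show "\<forall>S\<in>{S. S \<subseteq> {..<n} \<and> card S = k}. ?positions (?word S) = S"
      by auto
    show "?positions ` {u. length u = n \<and> count_list u True = k} \<subseteq> {S. S \<subseteq> {..<n} \<and> card S = k}"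
      by (auto simp: count_list_True_eq_card)
    have "count_list (?word S) True = card S" if "S \<subseteq> {..<n}" for S
      using that unfolding count_list_True_eq_card by (intro arg_cong[where f = card]) auto
    then show "?word ` {S. S \<subseteq> {..<n} \<and> card S = k} \<subseteq> {u. length u = n \<and> count_list u True = k}"
      by auto
  qed
  then show ?thesis by (simp add: bij_betw_same_card n_subsets)
qed

definition num_balanced :: "nat \<Rightarrow> nat" where
  "num_balanced n = (if even n then n choose (n div 2) else 0)"

lemma balanced11_iff_count: "balanced11 u \<longleftrightarrow> 2 * count_list u True = length u"
proof -
  have "count_list u True + count_list u False = length u"
    by (induction u) auto
  then show ?thesis unfolding balanced11_def by linarith
qed

lemma card_balanced_words: "card {u :: bool list. length u = n \<and> balanced11 u} = num_balanced n"
proof (cases "even n")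
  case True
  then have "{u :: bool list. length u = n \<and> balanced11 u}
           = {u. length u = n \<and> count_list u True = n div 2}"
    by (auto simp: balanced11_iff_count)
  then show ?thesis using True by (simp add: card_words_with_count num_balanced_def)
next
  case False
  then have "{u :: bool list. length u = n \<and> balanced11 u} = {}"
    by (auto simp: balanced11_iff_count) (metis dvd_triv_left)
  then show ?thesis using False by (metis card.empty num_balanced_def)
qed

lemma necklace_conv_image:
  assumes "length w = m" "m > 0"
  shows "necklace w = (\<lambda>k. rotate k w) ` {..<m}"
  unfolding necklace_def using assms
  by (auto simp: image_iff)
    (metis lessThan_iff length_greater_0_conv mod_less_divisor rotate_conv_mod)

(* Rotating a word does not change its necklace: rotation by m - (j mod m) undoes
   rotation by j.  Hence necklaces are the classes of an equivalence relation. *)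
lemma necklace_rotate: "necklace (rotate j w) = necklace w"
proof (cases "w = []")
  case False
  define m where "m = length w"
  have "(m - j mod m + j) mod m = (m - j mod m + j mod m) mod m"
    by (rule mod_add_right_eq[symmetric])
  also have "\<dots> = 0" using False by (simp add: m_def)
  finally have "rotate (m - j mod m + j) w = w" by (simp add: m_def)
  then have undo: "rotate k w = rotate (k + (m - j mod m) + j) w" for k
    by (metis rotate_rotate add.assoc)
  show ?thesis
    unfolding necklace_def by (auto simp: rotate_rotate) (metis undo)
qed simp

lemma necklace_eqI:
  assumes "v \<in> necklace w"
  shows "necklace v = necklace w"
proof -
  obtain j where "v = rotate j w" using assms unfolding necklace_def by blast
  then show ?thesis by (simp add: necklace_rotate)
qed

definition rotation_stabilizer :: "'a list \<Rightarrow> nat set" where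
  "rotation_stabilizer w = {k. k < length w \<and> rotate k w = w}"

(* The rotations taking w to its j-th rotation form the translate of the
   stabilizer by j (mod |w|), so they are equally many. *)
lemma card_rotation_fiber:
  assumes "j < length w"
  shows "card {k. k < length w \<and> rotate k w = rotate j w} = card (rotation_stabilizer w)"
proof -
  define m where "m = length w"
  have "m > 0" using assms unfolding m_def by linarith
  let ?shift = "\<lambda>s. (s + j) mod m"
  have "{k. k < m \<and> rotate k w = rotate j w} = ?shift ` rotation_stabilizer w"
  proof (intro equalityI subsetI)
    fix k assume "k \<in> {k. k < m \<and> rotate k w = rotate j w}"
    then have k: "k < m" "rotate k w = rotate j w" by simp_all
    define s where "s = (k + (m - j)) mod m"
    have "rotate s w = rotate (m - j) (rotate k w)"
      by (metis s_def m_def rotate_conv_mod rotate_rotate add.commute)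
    also have "\<dots> = w"
      using k assms by (simp add: rotate_rotate m_def)
    finally have "s \<in> rotation_stabilizer w"
      using \<open>m > 0\<close> by (simp add: rotation_stabilizer_def s_def m_def)
    moreover have "?shift s = k"
      using k assms by (simp add: s_def mod_add_left_eq m_def)
    ultimately show "k \<in> ?shift ` rotation_stabilizer w" by force
  next
    fix k assume "k \<in> ?shift ` rotation_stabilizer w"
    then obtain s where s: "rotate s w = w" and k: "k = (s + j) mod m"
      by (auto simp: rotation_stabilizer_def)
    have "rotate k w = rotate j (rotate s w)"
      by (metis k m_def rotate_conv_mod rotate_rotate add.commute)
    then show "k \<in> {k. k < m \<and> rotate k w = rotate j w}"
      using s k \<open>m > 0\<close> by simp
  qed
  moreover have "inj_on ?shift (rotation_stabilizer w)"
    by (intro inj_onI)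
      (metis cong_def cong_add_rcancel_nat cong_less_modulus_unique_nat
         rotation_stabilizer_def mem_Collect_eq m_def)
  ultimately show ?thesis by (simp add: card_image m_def)
qed

(* Orbit-stabilizer: the |w| rotations of w are split into the fibres over the words
   of its necklace, each of the size of the stabilizer. *)
lemma orbit_stabilizer:
  assumes "w \<noteq> []"
  shows "card (necklace w) * card (rotation_stabilizer w) = length w"
proof -
  define m where "m = length w"
  have m: "m > 0" using assms by (simp add: m_def)
  have "m = (\<Sum>k<m. 1 :: nat)" by simp
  also have "\<dots> = (\<Sum>v \<in> (\<lambda>k. rotate k w) ` {..<m}. card {k. k < m \<and> rotate k w = v})"
    by (subst sum.image_gen[of "{..<m}" _ "\<lambda>k. rotate k w"]) (simp_all add: Collect_conj_eq lessThan_def)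
  also have "\<dots> = (\<Sum>v \<in> (\<lambda>k. rotate k w) ` {..<m}. card (rotation_stabilizer w))"
    by (intro sum.cong refl) (auto simp: card_rotation_fiber m_def)
  also have "(\<lambda>k. rotate k w) ` {..<m} = necklace w"
    using necklace_conv_image[OF m_def[symmetric] m] by simp
  finally show ?thesis by (simp add: m_def)
qed

lemma in_necklace: "w \<in> necklace w"
  unfolding necklace_def by (metis (mono_tags) mem_Collect_eq rotate0 id_apply)

(* Burnside's lemma for rotations of a finite, rotation-closed set B of words of
   length m: counting the pairs (k, w) with rotate k w = w first by k, then by w, and
   summing the stabilizer sizes over each necklace, which gives m by orbit-stabilizer. *)
lemma burnside_rotation:
  assumes fin: "finite B" and m: "m > 0"
    and len: "\<And>w. w \<in> B \<Longrightarrow> length w = m"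
    and closed: "\<And>w k. w \<in> B \<Longrightarrow> rotate k w \<in> B"
  shows "m * card (necklace ` B) = (\<Sum>k<m. card {w \<in> B. rotate k w = w})"
proof -
  have orbit_subset: "necklace w \<subseteq> B" if "w \<in> B" for w
    using closed that by (auto simp: necklace_def)
  have stabilizer_sum: "(\<Sum>w \<in> necklace w0. card (rotation_stabilizer w)) = m"
    if "w0 \<in> B" for w0
  proof -
    let ?N = "necklace w0"
    have "finite ?N" using fin orbit_subset[OF that] by (rule finite_subset[rotated])
    then have "card ?N > 0" using in_necklace[of w0] by (auto simp: card_gt_0_iff)
    have orbit_card: "card ?N * card (rotation_stabilizer w) = m" if "w \<in> ?N" for w
    proof -
      have "w \<in> B" using that orbit_subset \<open>w0 \<in> B\<close> by blast
      then have "length w = m" and "w \<noteq> []" using len m by auto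
      then show ?thesis using orbit_stabilizer[of w] necklace_eqI[OF that] by simp
    qed
    then have "(\<Sum>w \<in> ?N. card (rotation_stabilizer w)) = (\<Sum>w \<in> ?N. m div card ?N)"
      using \<open>card ?N > 0\<close> by (intro sum.cong refl) (metis nonzero_mult_div_cancel_left not_gr0)
    also have "\<dots> = card ?N * (m div card ?N)" by simp
    also have "\<dots> = m"
      using orbit_card[OF in_necklace] \<open>card ?N > 0\<close>
      by (metis nonzero_mult_div_cancel_left not_gr0)
    finally show ?thesis .
  qed
  have fiber: "{w \<in> B. necklace w = necklace w0} = necklace w0" if "w0 \<in> B" for w0
    using orbit_subset[OF that] necklace_eqI in_necklace by blast
  have "(\<Sum>k<m. card {w \<in> B. rotate k w = w}) = (\<Sum>k<m. \<Sum>w\<in>B. if rotate k w = w then 1 else 0)"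
    using fin by (simp add: sum.inter_filter[symmetric])
  also have "\<dots> = (\<Sum>w\<in>B. card (rotation_stabilizer w))"
    using len by (subst sum.swap) (simp add: sum.inter_filter[symmetric] rotation_stabilizer_def lessThan_def Collect_conj_eq)
  also have "\<dots> = (\<Sum>N \<in> necklace ` B. \<Sum>w \<in> {w \<in> B. necklace w = N}. card (rotation_stabilizer w))"
    using fin by (rule sum.image_gen)
  also have "\<dots> = (\<Sum>N \<in> necklace ` B. m)"
    by (intro sum.cong refl) (auto simp: fiber stabilizer_sum)
  finally show ?thesis by simp
qed

(* Grouping k < m by d = gcd(k, m): exactly phi(m/d) of them have gcd d. *)
lemma sum_over_gcd:
  fixes f :: "nat \<Rightarrow> 'a :: comm_semiring_1"
  assumes m: "m > 0"
  shows "(\<Sum>k<m. f (gcd k m)) = (\<Sum>d | d dvd m. of_nat (totient d) * f (m div d))"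
proof -
  have "(\<Sum>k<m. f (gcd k m)) = (\<Sum>k\<in>{0<..m}. f (gcd k m))"
  proof -
    have "{..<m} = insert 0 {0<..<m}" and "{0<..m} = insert m {0<..<m}" using m by auto
    then show ?thesis by simp
  qed
  also have "\<dots> = (\<Sum>d \<in> (\<lambda>k. gcd k m) ` {0<..m}. \<Sum>k \<in> {k\<in>{0<..m}. gcd k m = d}. f (gcd k m))"
    by (rule sum.image_gen) simp
  also have "(\<lambda>k. gcd k m) ` {0<..m} = {d. d dvd m}"
  proof (intro equalityI subsetI)
    fix d assume "d \<in> {d. d dvd m}"
    then have "d \<in> {0<..m}" and "gcd d m = d"
      using m by (auto intro: dvd_imp_le Nat.gr0I simp: gcd_nat.absorb1)
    then show "d \<in> (\<lambda>k. gcd k m) ` {0<..m}" by force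
  qed auto
  also have "(\<Sum>d | d dvd m. \<Sum>k \<in> {k\<in>{0<..m}. gcd k m = d}. f (gcd k m))
           = (\<Sum>d | d dvd m. of_nat (totient (m div d)) * f d)"
  proof (intro sum.cong refl)
    fix d assume "d \<in> {d. d dvd m}"
    then have "card {k\<in>{0<..m}. gcd k m = d} = totient (m div d)"
      using card_gcd_eq_totient[OF m] by simp
    then show "(\<Sum>k \<in> {k\<in>{0<..m}. gcd k m = d}. f (gcd k m)) = of_nat (totient (m div d)) * f d"
      by simp
  qed
  also have "\<dots> = (\<Sum>d | d dvd m. of_nat (totient d) * f (m div d))"
    using m by (intro sum.reindex_bij_witness[of _ "(div) m" "(div) m"]) (auto elim: dvdE)
  finally show ?thesis .
qed

theorem balanced_necklace_count:
  assumes "m > 0"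
  shows "m * card (balanced_necklaces m) = (\<Sum>d | d dvd m. totient d * num_balanced (m div d))"
proof -
  let ?B = "{w :: bool list. length w = m \<and> balanced11 w}"
  have "finite ?B"
    by (rule finite_subset[OF _ finite_lists_length_eq[of "UNIV :: bool set" m]]) auto
  then have "m * card (balanced_necklaces m) = (\<Sum>k<m. card {w \<in> ?B. rotate k w = w})"
    unfolding balanced_necklaces_def using assms by (intro burnside_rotation) auto
  also have "\<dots> = (\<Sum>k<m. num_balanced (gcd k m))"
    using card_rotation_fixed_balanced[OF assms] card_balanced_words
    by (simp add: conj_assoc)
  also have "\<dots> = (\<Sum>d | d dvd m. totient d * num_balanced (m div d))"
    using sum_over_gcd[OF assms, of num_balanced] by simp
  finally show ?thesis .
qed

lemma fps_compose_X_power_nth: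
  fixes a :: "'a :: comm_semiring_1 fps"
  assumes n: "n > 0"
  shows "(a oo fps_X ^ n) $ m = (if n dvd m then a $ (m div n) else 0)"
proof -
  have "(a oo fps_X ^ n) $ m = (\<Sum>i\<in>{0..m}. if i = m div n \<and> n dvd m then a $ i else 0)"
    unfolding fps_compose_nth
  proof (intro sum.cong refl)
    fix i
    have "m = n * i \<longleftrightarrow> i = m div n \<and> n dvd m" using n by auto
    then show "a $ i * ((fps_X ^ n) ^ i $ m) = (if i = m div n \<and> n dvd m then a $ i else 0)"
      by (simp add: power_mult[symmetric] mult.commute)
  qed
  also have "\<dots> = (if n dvd m then a $ (m div n) else 0)"
    by (auto simp: sum.delta')
  finally show ?thesis .
qed

(* A series sum_{k >= 1} c(k) * A(x^k) with A(0) = 0 converges in the formal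
   topology (each coefficient gets contributions from only finitely many terms), and
   its n-th coefficient is the divisor sum sum_{d | n} c(d) * A_{n/d}. *)
lemma sums_divisor_composition:
  fixes c :: "nat \<Rightarrow> 'a :: comm_ring_1" and a G :: "'a fps"
  assumes a0: "a $ 0 = 0" and G0: "G $ 0 = 0"
    and coeff: "\<And>n. n > 0 \<Longrightarrow> G $ n = (\<Sum>d | d dvd n. c d * a $ (n div d))"
  shows "(\<lambda>k. fps_const (c (Suc k)) * (a oo fps_X ^ Suc k)) sums G"
proof -
  define f where "f k = fps_const (c (Suc k)) * (a oo fps_X ^ Suc k)" for k
  have nth: "f k $ n = (if Suc k dvd n then c (Suc k) * a $ (n div Suc k) else 0)" for k n
    by (simp add: f_def fps_compose_X_power_nth del: power_Suc)
  have partial_sum: "(\<Sum>k<N. f k) $ n = G $ n" if "n \<le> N" for N n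
  proof (cases "n = 0")
    case True
    then show ?thesis by (simp add: fps_sum_nth nth a0 G0)
  next
    case False
    have "(\<Sum>k<N. f k) $ n = (\<Sum>k<N. f k $ n)" by (simp add: fps_sum_nth)
    also have "\<dots> = (\<Sum>k<n. f k $ n)"
      using that False by (intro sum.mono_neutral_right) (auto simp: nth dest: dvd_imp_le)
    also have "\<dots> = (\<Sum>d \<in> Suc ` {..<n}. if d dvd n then c d * a $ (n div d) else 0)"
      by (simp add: sum.reindex nth)
    also have "Suc ` {..<n} = {1..n}" by (simp add: image_Suc_lessThan)
    also have "(\<Sum>d\<in>{1..n}. if d dvd n then c d * a $ (n div d) else 0)
             = (\<Sum>d | d dvd n. c d * a $ (n div d))"
      using False by (subst sum.inter_filter[symmetric]) (auto intro!: sum.cong dest: dvd_imp_le Nat.gr0I)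
    finally show ?thesis using coeff False by simp
  qed
  have "f sums G"
    unfolding sums_def by (rule tendsto_fpsI) (use partial_sum in \<open>auto simp: eventually_sequentially\<close>)
  then show ?thesis by (simp add: f_def[abs_def])
qed

lemma S11_nth: "S11 $ n = (if n = 0 then 0 else real (num_balanced n))"
  by (simp add: S11_def num_balanced_def)

lemma L11_nth: "L11 $ n = S11 $ n / real n"
  by (simp add: L11_def S11_def)

lemma C11_divisor_sum:
  assumes n: "n > 0"
  shows "real n * C11 $ n = (\<Sum>d | d dvd n. real (totient d) * S11 $ (n div d))"
proof -
  have "real n * C11 $ n = real (n * card (balanced_necklaces n))"
    using n by (simp add: C11_def)
  also have "\<dots> = (\<Sum>d | d dvd n. real (totient d) * real (num_balanced (n div d)))"
    unfolding balanced_necklace_count[OF n] by simp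
  also have "\<dots> = (\<Sum>d | d dvd n. real (totient d) * S11 $ (n div d))"
    using n by (intro sum.cong refl) (auto simp: S11_nth elim!: dvdE)
  finally show ?thesis .
qed

lemma C11_series:
  "(\<lambda>k. fps_const (real (totient (Suc k)) / real (Suc k)) * (L11 oo fps_X ^ Suc k)) sums C11"
proof (rule sums_divisor_composition)
  fix n :: nat assume n: "n > 0"
  have "C11 $ n = (\<Sum>d | d dvd n. real (totient d) * S11 $ (n div d)) / real n"
    using C11_divisor_sum[OF n] n by (simp add: field_simps)
  also have "\<dots> = (\<Sum>d | d dvd n. real (totient d) / real d * L11 $ (n div d))"
    unfolding sum_divide_distrib L11_nth
    using n by (intro sum.cong refl) (auto elim!: dvdE)
  finally show "C11 $ n = (\<Sum>d | d dvd n. real (totient d) / real d * L11 $ (n div d))" .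
qed (simp_all add: L11_def C11_def)

(* Second identity: x * C11'(x) = sum_{n >= 1} phi(n) * S11(x^n), since the n-th
   coefficient of x C11' is n times that of C11. *)
lemma pointed_C11_series:
  "(\<lambda>k. fps_const (real (totient (Suc k))) * (S11 oo fps_X ^ Suc k)) sums (fps_X * fps_deriv C11)"
proof (rule sums_divisor_composition)
  fix n :: nat assume n: "n > 0"
  have "(fps_X * fps_deriv C11) $ n = real n * C11 $ n"
    using n by (cases n) simp_all
  then show "(fps_X * fps_deriv C11) $ n = (\<Sum>d | d dvd n. real (totient d) * S11 $ (n div d))"
    using C11_divisor_sum[OF n] by simp
qed (simp_all add: S11_def)

theorem mainTheorem4:
  shows "(\<lambda>k. fps_const (real (totient (Suc k)) / real (Suc k)) * (L11 oo fps_X ^ Suc k))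
           sums C11
       \<and> (\<lambda>k. fps_const (real (totient (Suc k))) * (S11 oo fps_X ^ Suc k))
           sums (fps_X * fps_deriv C11)"
  using C11_series pointed_C11_series by blast

end
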